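(* Let $f\in H^2(\mathbb{D})$. Then $|\langle f,e_{n,a}\rangle|\to 0$ as $|a|\to 1$, uniformly in $n\in\mathbb{N}$; that is, for every $\varepsilon>0$ there is $r<1$ such that $|\langle f,e_{n,a}\rangle|<\varepsilon$ for all $a\in\mathbb{D}$ with $|a|>r$ and all $n\in\mathbb{N}$.
   Context: $\mathbb{D}$ is the open unit disc; $H^2(\mathbb{D})$ the Hardy space with inner product $\langle f,g\rangle=\frac{1}{2\pi}\int_0^{2\pi}f(e^{it})\overline{g(e^{it})}\,dt$. For $n\in\mathbb{N}=\{0,1,\dots\}$ and $a\in\mathbb{D}$, $k_{n,a}(z)=\left(\frac{\partial}{\partial\overline{a}}\right)^n\frac{1}{1-\overline{a}z}=\frac{n!\,z^n}{(1-\overline{a}z)^{n+1}}$ and $e_{n,a}=k_{n,a}/\|k_{n,a}\|$. *)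

theory Defs
  imports "HOL-Complex_Analysis.Complex_Analysis"
begin

definition hardy2 :: "(complex \<Rightarrow> complex) set" where
  "hardy2 = {f. f holomorphic_on ball 0 1 \<and>
     (\<exists>B. \<forall>r\<in>{0<..<1::real}.
        integral {0..2*pi} (\<lambda>t. (cmod (f (complex_of_real r * cis t)))^2) / (2*pi) \<le> B)}"

text \<open>Inner product of H^2: the boundary integral, realised as the radial limit
  of the circle integrals (this equals the boundary-value integral on H^2).\<close>
definition h2_inner :: "(complex \<Rightarrow> complex) \<Rightarrow> (complex \<Rightarrow> complex) \<Rightarrow> complex" where
  "h2_inner f g = Lim (at_left (1::real))
     (\<lambda>r. integral {0..2*pi}
        (\<lambda>t. f (complex_of_real r * cis t) * cnj (g (complex_of_real r * cis t))) / (2*pi))"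

definition h2_norm :: "(complex \<Rightarrow> complex) \<Rightarrow> real" where
  "h2_norm f = sqrt (Re (h2_inner f f))"

definition kern :: "nat \<Rightarrow> complex \<Rightarrow> complex \<Rightarrow> complex" where
  "kern n a z = fact n * z ^ n / (1 - cnj a * z) ^ (n + 1)"

definition ekern :: "nat \<Rightarrow> complex \<Rightarrow> complex \<Rightarrow> complex" where
  "ekern n a z = kern n a z / complex_of_real (h2_norm (kern n a))"

end

theory Submission
  imports Defs
begin

text \<open>
  On a circle \<open>|z| = r < 1\<close> the monomials are orthogonal, so for power series with
  coefficients \<open>c\<close>, \<open>d\<close> the normalised circle integral of \<open>F * cnj G\<close> is
  \<open>\<Sum>k. c k * cnj (d k) * r^(2*k)\<close>. Letting \<open>r \<rightarrow> 1\<close> (Abel) identifies the H^2 inner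
  product with the l^2 inner product of the Taylor coefficients, and the H^2 bound on \<open>f\<close>
  makes its coefficients square summable.

  The k-th Taylor coefficient of \<open>k_{n,a}\<close> is \<open>n! (k choose n) conj(a)^(k-n)\<close>; it is at
  most \<open>n! 2^k\<close>, while the l^2 norm of all of them is at least \<open>n! / sqrt (1 - |a|^2)\<close>.
  Hence the k-th coefficient of \<open>e_{n,a}\<close> is at most \<open>2^k sqrt (1 - |a|^2)\<close>, uniformly
  in \<open>n\<close>. Splitting \<open><f, e_{n,a}>\<close> after the first K coefficients, the tail is small
  for large K by Cauchy-Schwarz, and the head is small once \<open>|a|\<close> is close to 1.
\<close>

lemma has_integral_cis_int:
  fixes j :: int
  shows "((\<lambda>t. cis (of_int j * t)) has_integral (if j = 0 then 2*pi else 0)) {0..2*pi}"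
proof (cases "j = 0")
  case True
  then show ?thesis
    using has_integral_const_real[of "1::complex" 0 "2*pi"] by (simp add: scaleR_conv_of_real)
next
  case False
  have "((\<lambda>t. cis (of_int j * t) / (\<i> * of_int j)) has_vector_derivative cis (of_int j * t)) (at t)"
    for t
    unfolding cis_conv_exp using False
    by (auto intro!: derivative_eq_intros has_vector_derivative_real_field simp: field_simps)
  then have "((\<lambda>t. cis (of_int j * t)) has_integral
      (cis (of_int j * (2*pi)) / (\<i> * of_int j) - cis (of_int j * 0) / (\<i> * of_int j))) {0..2*pi}"
    by (intro fundamental_theorem_of_calculus) (auto intro: has_vector_derivative_at_within)
  moreover have "cis (of_int j * (2*pi)) = 1"
    using cis_multiple_2pi[of "of_int j"] by (simp add: mult.commute)
  ultimately show ?thesis using False by simp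
qed

lemma has_integral_cis_mult_cnj_cis:
  "((\<lambda>t. cis (real m * t) * cnj (cis (real k * t))) has_integral (if m = k then 2*pi else 0)) {0..2*pi}"
proof -
  have "cis (real m * t) * cnj (cis (real k * t)) = cis (of_int (int m - int k) * t)" for t
    by (simp add: cis_cnj cis_mult algebra_simps)
  then show ?thesis using has_integral_cis_int[of "int m - int k"] by simp
qed

lemma sums_integral_Weierstrass:
  fixes u :: "nat \<Rightarrow> real \<Rightarrow> 'a::banach"
  assumes "\<And>k. continuous_on {a..b} (u k)"
    and "\<And>k t. t \<in> {a..b} \<Longrightarrow> norm (u k t) \<le> M k" and "summable M"
  shows "(\<lambda>k. integral {a..b} (u k)) sums integral {a..b} (\<lambda>t. \<Sum>k. u k t)"
proof -
  have "uniform_limit {a..b} (\<lambda>n t. \<Sum>k<n. u k t) (\<lambda>t. \<Sum>k. u k t) sequentially"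
    using assms(2,3) by (rule Weierstrass_m_test)
  then obtain I J where I: "\<And>n. ((\<lambda>t. \<Sum>k<n. u k t) has_integral I n) {a..b}"
    and J: "((\<lambda>t. \<Sum>k. u k t) has_integral J) {a..b}" and "I \<longlonglongrightarrow> J"
    by (rule uniform_limit_integral) (auto intro!: continuous_on_sum assms(1))
  moreover have "I = (\<lambda>n. \<Sum>k<n. integral {a..b} (u k))"
  proof
    fix n
    have "((\<lambda>t. \<Sum>k<n. u k t) has_integral (\<Sum>k<n. integral {a..b} (u k))) {a..b}"
      by (intro has_integral_sum) (auto intro!: integrable_integral integrable_continuous_interval assms(1))
    with I[of n] show "I n = (\<Sum>k<n. integral {a..b} (u k))" by (rule has_integral_unique)
  qed
  ultimately show ?thesis
    using J by (simp add: sums_def integral_unique)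
qed

lemma summable_norm_coeff_mult_power:
  fixes c :: "nat \<Rightarrow> complex"
  assumes "\<And>z. norm z < 1 \<Longrightarrow> summable (\<lambda>k. c k * z^k)" and "0 \<le> r" "r < 1"
  shows "summable (\<lambda>k. norm (c k) * r^k)"
proof -
  have "norm (complex_of_real ((1 + r) / 2)) < 1"
    and "norm (complex_of_real r) < norm (complex_of_real ((1 + r) / 2))"
    using assms by (simp_all only: norm_of_real) simp_all
  then have "summable (\<lambda>k. norm (c k * of_real r ^ k))"
    using assms(1) powser_insidea by blast
  then show ?thesis using assms by (simp add: norm_mult norm_power)
qed

lemma continuous_on_power_series_disc:
  fixes c :: "nat \<Rightarrow> complex"
  assumes sF: "\<And>z. norm z < 1 \<Longrightarrow> (\<lambda>k. c k * z^k) sums F z"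
  shows "continuous_on (ball 0 1) F"
proof -
  have "isCont F z" if z: "norm z < 1" for z
  proof -
    have "norm (complex_of_real ((1 + norm z) / 2)) < 1"
      and "norm z < norm (complex_of_real ((1 + norm z) / 2))"
      using z by (simp_all only: norm_of_real) simp_all
    then have "isCont (\<lambda>w. \<Sum>k. c k * w^k) z"
      using sF sums_summable isCont_powser by blast
    moreover have "\<forall>\<^sub>F w in nhds z. (\<Sum>k. c k * w^k) = F w"
      using eventually_nhds_in_open[of "ball 0 1" z] z
      by (auto elim!: eventually_mono dest!: sF simp: sums_iff)
    ultimately show ?thesis using isCont_cong by fastforce
  qed
  then show ?thesis by (simp add: continuous_on_eq_continuous_at)
qed

lemma continuous_on_circle:
  assumes "continuous_on (ball 0 1) F" and "0 \<le> r" "r < 1"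
  shows "continuous_on S (\<lambda>t. F (of_real r * cis t))"
proof (rule continuous_on_compose2[OF assms(1)])
  show "continuous_on S (\<lambda>t. of_real r * cis t)"
    by (intro continuous_intros)
  show "(\<lambda>t. of_real r * cis t) ` S \<subseteq> ball 0 1"
    using assms by (auto simp: norm_mult)
qed

lemma norm_power_series_le:
  fixes c :: "nat \<Rightarrow> complex"
  assumes sF: "\<And>z. norm z < 1 \<Longrightarrow> (\<lambda>k. c k * z^k) sums F z" and z: "norm z < 1"
  shows "norm (F z) \<le> (\<Sum>k. norm (c k) * norm z ^ k)"
proof -
  have "summable (\<lambda>k. norm (c k) * norm z ^ k)"
    using sF z by (intro summable_norm_coeff_mult_power) (auto simp: sums_iff)
  then have "norm (\<Sum>k. c k * z^k) \<le> (\<Sum>k. norm (c k * z^k))"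
    by (intro summable_norm) (simp add: norm_mult norm_power)
  then show ?thesis
    using sF[OF z] by (simp add: sums_iff norm_mult norm_power)
qed

lemma circle_integral_coeff:
  fixes c :: "nat \<Rightarrow> complex"
  assumes sF: "\<And>z. norm z < 1 \<Longrightarrow> (\<lambda>k. c k * z^k) sums F z" and r: "0 \<le> r" "r < 1"
  shows "integral {0..2*pi} (\<lambda>t. F (of_real r * cis t) * cnj (cis (real k * t))) =
    2 * pi * c k * of_real (r^k)"
proof -
  define u where "u m t = c m * of_real (r^m) * (cis (real m * t) * cnj (cis (real k * t)))" for m t
  have "summable (\<lambda>m. norm (c m) * r^m)"
    using sF r by (intro summable_norm_coeff_mult_power) (auto simp: sums_iff)
  then have termwise: "(\<lambda>m. integral {0..2*pi} (u m)) sums integral {0..2*pi} (\<lambda>t. \<Sum>m. u m t)"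
  proof (rule sums_integral_Weierstrass[rotated 2])
    show "continuous_on {0..2*pi} (u m)" for m
      unfolding u_def by (intro continuous_intros)
    show "norm (u m t) \<le> norm (c m) * r^m" for m t
      using r by (simp add: u_def norm_mult norm_power)
  qed
  have orthogonality: "(\<lambda>m. integral {0..2*pi} (u m)) sums (2 * pi * c k * of_real (r^k))"
  proof -
    have "integral {0..2*pi} (u m) = c m * of_real (r^m) * of_real (if m = k then 2*pi else 0)" for m
      unfolding u_def by (intro integral_unique has_integral_mult_right has_integral_cis_mult_cnj_cis)
    then have "(\<lambda>m. integral {0..2*pi} (u m)) =
        (\<lambda>m. if m = k then 2 * pi * c k * of_real (r^k) else 0)"
      by auto
    then show ?thesis
      using sums_single[of k "\<lambda>_. 2 * pi * c k * of_real (r^k)"] by simp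
  qed
  have "(\<Sum>m. u m t) = F (of_real r * cis t) * cnj (cis (real k * t))" for t
  proof -
    have "(\<lambda>m. c m * (of_real r * cis t)^m * cnj (cis (real k * t))) sums
        (F (of_real r * cis t) * cnj (cis (real k * t)))"
      using r by (intro sums_mult2 sF) (simp add: norm_mult)
    moreover have "c m * (of_real r * cis t)^m * cnj (cis (real k * t)) = u m t" for m
      by (simp add: u_def power_mult_distrib Complex.DeMoivre)
    ultimately show ?thesis by (simp add: sums_iff)
  qed
  with termwise orthogonality show ?thesis
    by (simp add: sums_iff)
qed

lemma circle_Parseval:
  fixes c d :: "nat \<Rightarrow> complex"
  assumes sF: "\<And>z. norm z < 1 \<Longrightarrow> (\<lambda>k. c k * z^k) sums F z"
    and sG: "\<And>z. norm z < 1 \<Longrightarrow> (\<lambda>k. d k * z^k) sums G z"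
    and r: "0 \<le> r" "r < 1"
  shows "(\<lambda>k. c k * cnj (d k) * of_real (r^(2*k))) sums
     (integral {0..2*pi} (\<lambda>t. F (of_real r * cis t) * cnj (G (of_real r * cis t))) / (2*pi))"
proof -
  define B where "B = (\<Sum>m. norm (c m) * r^m)"
  define u where "u k t = cnj (d k) * of_real (r^k) * (F (of_real r * cis t) * cnj (cis (real k * t)))"
    for k t
  have d1: "summable (\<lambda>m. norm (d m) * r^m)"
    using sG r by (intro summable_norm_coeff_mult_power) (auto simp: sums_iff)
  have F_le: "norm (F (of_real r * cis t)) \<le> B" for t
    using norm_power_series_le[OF sF, of "of_real r * cis t"] r by (simp add: B_def norm_mult)
  have "(\<lambda>k. integral {0..2*pi} (u k)) sums integral {0..2*pi} (\<lambda>t. \<Sum>k. u k t)"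
  proof (rule sums_integral_Weierstrass)
    show "continuous_on {0..2*pi} (u k)" for k
      unfolding u_def
      by (intro continuous_intros continuous_on_circle[OF continuous_on_power_series_disc[OF sF] r])
    show "norm (u k t) \<le> B * (norm (d k) * r ^ k)" for k t
      using mult_right_mono[OF F_le[of t], of "norm (d k) * r^k"] r
      by (simp add: u_def norm_mult norm_power mult_ac)
    show "summable (\<lambda>k. B * (norm (d k) * r ^ k))"
      using d1 by (rule summable_mult)
  qed
  moreover have "integral {0..2*pi} (u k) = 2 * pi * (c k * cnj (d k) * of_real (r^(2*k)))" for k
  proof -
    have "integral {0..2*pi} (u k) = cnj (d k) * of_real (r^k) *
        integral {0..2*pi} (\<lambda>t. F (of_real r * cis t) * cnj (cis (real k * t)))"
      unfolding u_def by (rule integral_mult_right)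
    also have "\<dots> = cnj (d k) * of_real (r^k) * (2 * pi * c k * of_real (r^k))"
      by (simp only: circle_integral_coeff[OF sF r])
    finally show ?thesis
      by (simp only: mult.commute[of 2 k] power_mult power2_eq_square of_real_mult of_real_power
          mult_ac)
  qed
  moreover have "(\<Sum>k. u k t) = F (of_real r * cis t) * cnj (G (of_real r * cis t))" for t
  proof -
    have "(\<lambda>m. cnj (d m * (of_real r * cis t)^m)) sums cnj (G (of_real r * cis t))"
      using r by (simp only: sums_cnj) (intro sG, simp add: norm_mult)
    then have "(\<lambda>m. F (of_real r * cis t) * cnj (d m * (of_real r * cis t)^m)) sums
        (F (of_real r * cis t) * cnj (G (of_real r * cis t)))"
      by (rule sums_mult)
    moreover have "F (of_real r * cis t) * cnj (d m * (of_real r * cis t)^m) = u m t" for m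
      by (simp add: u_def power_mult_distrib Complex.DeMoivre)
    ultimately show ?thesis by (simp add: sums_iff)
  qed
  ultimately have "(\<lambda>k. 2 * pi * (c k * cnj (d k) * of_real (r^(2*k)))) sums
      integral {0..2*pi} (\<lambda>t. F (of_real r * cis t) * cnj (G (of_real r * cis t)))"
    by simp
  from sums_divide[OF this, of "2*pi"] show ?thesis
    by simp
qed

lemma circle_mean_square_sums:
  fixes c :: "nat \<Rightarrow> complex"
  assumes sF: "\<And>z. norm z < 1 \<Longrightarrow> (\<lambda>k. c k * z^k) sums F z" and r: "0 \<le> r" "r < 1"
  shows "(\<lambda>k. norm (c k)^2 * r^(2*k)) sums
     (integral {0..2*pi} (\<lambda>t. norm (F (of_real r * cis t))^2) / (2*pi))"
proof -
  have "(\<lambda>t. norm (F (of_real r * cis t))^2) integrable_on {0..2*pi}"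
    by (intro integrable_continuous_interval continuous_intros
        continuous_on_circle[OF continuous_on_power_series_disc[OF sF] r])
  then have "((\<lambda>t. F (of_real r * cis t) * cnj (F (of_real r * cis t))) has_integral
      of_real (integral {0..2*pi} (\<lambda>t. norm (F (of_real r * cis t))^2))) {0..2*pi}"
    by (simp only: complex_norm_square[symmetric]) (intro has_integral_of_real integrable_integral)
  then have "integral {0..2*pi} (\<lambda>t. F (of_real r * cis t) * cnj (F (of_real r * cis t))) =
      of_real (integral {0..2*pi} (\<lambda>t. norm (F (of_real r * cis t))^2))"
    by (rule integral_unique)
  then have "(\<lambda>k. c k * cnj (c k) * of_real (r^(2*k))) sums
      (of_real (integral {0..2*pi} (\<lambda>t. norm (F (of_real r * cis t))^2)) / of_real (2*pi))"
    using circle_Parseval[OF sF sF r] by (simp only:)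
  moreover have "complex_of_real (norm (c k)^2 * r^(2*k)) = c k * cnj (c k) * of_real (r^(2*k))" for k
    by (simp only: of_real_mult complex_norm_square)
  ultimately have "(\<lambda>k. complex_of_real (norm (c k)^2 * r^(2*k))) sums
      of_real (integral {0..2*pi} (\<lambda>t. norm (F (of_real r * cis t))^2) / (2*pi))"
    by (simp only: of_real_divide)
  then show ?thesis by (simp only: sums_of_real_iff)
qed

lemma Cauchy_Schwarz_suminf:
  fixes u v :: "nat \<Rightarrow> real"
  assumes u: "summable (\<lambda>k. (u k)\<^sup>2)" and v: "summable (\<lambda>k. (v k)\<^sup>2)"
  shows "summable (\<lambda>k. \<bar>u k\<bar> * \<bar>v k\<bar>)"
    and "(\<Sum>k. \<bar>u k\<bar> * \<bar>v k\<bar>) \<le> sqrt (\<Sum>k. (u k)\<^sup>2) * sqrt (\<Sum>k. (v k)\<^sup>2)"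
proof -
  have partial: "(\<Sum>k<n. \<bar>u k\<bar> * \<bar>v k\<bar>) \<le> sqrt (\<Sum>k. (u k)\<^sup>2) * sqrt (\<Sum>k. (v k)\<^sup>2)" for n
  proof -
    have "(\<Sum>k<n. \<bar>u k\<bar> * \<bar>v k\<bar>) \<le> L2_set u {..<n} * L2_set v {..<n}"
      by (rule L2_set_mult_ineq)
    also have "\<dots> \<le> sqrt (\<Sum>k. (u k)\<^sup>2) * sqrt (\<Sum>k. (v k)\<^sup>2)"
      unfolding L2_set_def using u v
      by (intro mult_mono real_sqrt_le_mono sum_le_suminf) (auto intro: suminf_nonneg sum_nonneg)
    finally show ?thesis .
  qed
  then show "summable (\<lambda>k. \<bar>u k\<bar> * \<bar>v k\<bar>)"
    by (intro summableI_nonneg_bounded) auto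
  then show "(\<Sum>k. \<bar>u k\<bar> * \<bar>v k\<bar>) \<le> sqrt (\<Sum>k. (u k)\<^sup>2) * sqrt (\<Sum>k. (v k)\<^sup>2)"
    using partial by (rule suminf_le_const)
qed

lemma norm_suminf_mult_cnj_le:
  fixes c e :: "nat \<Rightarrow> complex"
  assumes c: "summable (\<lambda>k. norm (c k)^2)" and e: "summable (\<lambda>k. norm (e k)^2)"
  shows "norm (\<Sum>k. c k * cnj (e k)) \<le>
    (\<Sum>k<K. norm (c k) * norm (e k)) + sqrt (\<Sum>k. norm (c (k + K))^2) * sqrt (\<Sum>k. norm (e k)^2)"
proof -
  define T where "T = (\<lambda>k. norm (c k) * norm (e k))"
  have T: "summable T"
    unfolding T_def using Cauchy_Schwarz_suminf(1)[OF c e] by simp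
  have "norm (\<Sum>k. c k * cnj (e k)) \<le> (\<Sum>k. T k)"
    using summable_norm[of "\<lambda>k. c k * cnj (e k)"] T by (simp add: T_def norm_mult)
  also have "\<dots> = (\<Sum>k<K. T k) + (\<Sum>k. T (k + K))"
    using suminf_split_initial_segment[OF T, of K] by simp
  finally have split: "norm (\<Sum>k. c k * cnj (e k)) \<le> (\<Sum>k<K. T k) + (\<Sum>k. T (k + K))" .
  have c_tail: "summable (\<lambda>k. norm (c (k + K))^2)" and e_tail: "summable (\<lambda>k. norm (e (k + K))^2)"
    using c e summable_iff_shift[where f = "\<lambda>k. norm (c k)^2" and k = K]
      summable_iff_shift[where f = "\<lambda>k. norm (e k)^2" and k = K] by auto
  have "(\<Sum>k. T (k + K)) \<le> sqrt (\<Sum>k. norm (c (k + K))^2) * sqrt (\<Sum>k. norm (e (k + K))^2)"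
    using Cauchy_Schwarz_suminf(2)[OF c_tail e_tail] by (simp add: T_def)
  also have "\<dots> \<le> sqrt (\<Sum>k. norm (c (k + K))^2) * sqrt (\<Sum>k. norm (e k)^2)"
    using suminf_split_initial_segment[OF e, of K] suminf_nonneg[OF c_tail]
    by (intro mult_left_mono real_sqrt_le_mono) (auto simp: sum_nonneg)
  finally show ?thesis
    using split by (simp add: T_def)
qed

lemma summable_power2_if_summable_nonneg:
  fixes g :: "nat \<Rightarrow> real"
  assumes g: "summable g" and nonneg: "\<And>j. 0 \<le> g j"
  shows "summable (\<lambda>j. (g j)^2)"
proof (rule summable_comparison_test'[OF summable_mult[OF g, of "suminf g"]])
  fix j
  have "g j \<le> suminf g"
    using sum_le_suminf[OF g, of "{j}"] nonneg by simp
  then show "norm ((g j)^2) \<le> suminf g * g j"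
    using nonneg[of j] by (simp add: power2_eq_square mult_right_mono)
qed

lemma tendsto_suminf_even_powers_at_left_1:
  fixes w :: "nat \<Rightarrow> complex"
  assumes "summable (\<lambda>k. norm (w k))"
  shows "((\<lambda>r. \<Sum>k. w k * of_real (r^(2*k))) \<longlongrightarrow> (\<Sum>k. w k)) (at_left 1)"
proof -
  have uniform: "uniform_limit {0..1} (\<lambda>n r. \<Sum>k<n. w k * of_real (r^(2*k)))
      (\<lambda>r. \<Sum>k. w k * of_real (r^(2*k))) sequentially" (is "uniform_limit _ ?S _ _")
  proof (rule Weierstrass_m_test[OF _ assms])
    fix k and r :: real assume "r \<in> {0..1}"
    then have "norm (complex_of_real (r^(2*k))) \<le> 1"
      by (simp only: norm_of_real) (simp add: power_le_one)
    then show "norm (w k * of_real (r^(2*k))) \<le> norm (w k)"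
      unfolding norm_mult by (rule mult_left_le) simp
  qed
  have "\<forall>\<^sub>F n in sequentially. continuous_on {0..1} (?S n)"
    by (intro always_eventually allI continuous_intros)
  then have "continuous_on {0..1} (\<lambda>r. \<Sum>k. w k * of_real (r^(2*k)))"
    using uniform by (rule uniform_limit_theorem) simp
  from continuous_on_Icc_at_leftD[OF this] show ?thesis by simp
qed

lemma h2_inner_power_series:
  fixes c d :: "nat \<Rightarrow> complex"
  assumes sF: "\<And>z. norm z < 1 \<Longrightarrow> (\<lambda>k. c k * z^k) sums F z"
    and sG: "\<And>z. norm z < 1 \<Longrightarrow> (\<lambda>k. d k * z^k) sums G z"
    and c2: "summable (\<lambda>k. norm (c k)^2)" and d2: "summable (\<lambda>k. norm (d k)^2)"
  shows "h2_inner F G = (\<Sum>k. c k * cnj (d k))"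
proof -
  have "summable (\<lambda>k. norm (c k * cnj (d k)))"
    using Cauchy_Schwarz_suminf(1)[OF c2 d2] by (simp add: norm_mult)
  then have "((\<lambda>r. \<Sum>k. c k * cnj (d k) * of_real (r^(2*k))) \<longlongrightarrow> (\<Sum>k. c k * cnj (d k))) (at_left 1)"
    by (rule tendsto_suminf_even_powers_at_left_1)
  moreover have "\<forall>\<^sub>F r in at_left (1::real). r \<in> {0<..<1}"
    by (rule eventually_at_left_real) simp
  then have "\<forall>\<^sub>F r in at_left 1. (\<Sum>k. c k * cnj (d k) * of_real (r^(2*k))) =
      integral {0..2*pi} (\<lambda>t. F (of_real r * cis t) * cnj (G (of_real r * cis t))) / (2*pi)"
    by eventually_elim (use circle_Parseval[OF sF sG] in \<open>force simp: sums_iff\<close>)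
  ultimately show ?thesis
    unfolding h2_inner_def by (intro tendsto_Lim) (auto simp: tendsto_cong)
qed

definition taylor_coeff :: "(complex \<Rightarrow> complex) \<Rightarrow> nat \<Rightarrow> complex" where
  "taylor_coeff f k = (deriv ^^ k) f 0 / fact k"

lemma hardy2_taylor_sums:
  assumes "f \<in> hardy2" and "norm z < 1"
  shows "(\<lambda>k. taylor_coeff f k * z^k) sums f z"
  using assms holomorphic_power_series[of f 0 1 z] by (simp add: hardy2_def taylor_coeff_def)

lemma hardy2_taylor_coeff_square_summable:
  assumes f: "f \<in> hardy2"
  shows "summable (\<lambda>k. norm (taylor_coeff f k)^2)"
proof -
  obtain B where B: "\<And>r. r \<in> {0<..<1} \<Longrightarrow>
      integral {0..2*pi} (\<lambda>t. norm (f (of_real r * cis t))^2) / (2*pi) \<le> B"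
    using f unfolding hardy2_def by blast
  have "(\<Sum>k<N. norm (taylor_coeff f k)^2) \<le> B" for N
  proof (rule tendsto_upperbound)
    show "((\<lambda>r. \<Sum>k<N. norm (taylor_coeff f k)^2 * r^(2*k)) \<longlongrightarrow> (\<Sum>k<N. norm (taylor_coeff f k)^2))
        (at_left 1)"
      by (auto intro!: tendsto_eq_intros)
    have "\<forall>\<^sub>F r in at_left (1::real). r \<in> {0<..<1}"
      by (rule eventually_at_left_real) simp
    then show "\<forall>\<^sub>F r in at_left 1. B \<ge> (\<Sum>k<N. norm (taylor_coeff f k)^2 * r^(2*k))"
    proof eventually_elim
      case (elim r)
      then have mean_square: "(\<lambda>k. norm (taylor_coeff f k)^2 * r^(2*k)) sums
          (integral {0..2*pi} (\<lambda>t. norm (f (of_real r * cis t))^2) / (2*pi))"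
        by (intro circle_mean_square_sums hardy2_taylor_sums[OF f]) auto
      have "(\<Sum>k<N. norm (taylor_coeff f k)^2 * r^(2*k)) \<le> (\<Sum>k. norm (taylor_coeff f k)^2 * r^(2*k))"
        using mean_square by (intro sum_le_suminf) (auto simp: sums_iff)
      also have "\<dots> = integral {0..2*pi} (\<lambda>t. norm (f (of_real r * cis t))^2) / (2*pi)"
        using mean_square by (rule sums_unique[symmetric])
      also have "\<dots> \<le> B"
        using B elim by simp
      finally show ?case .
    qed
  qed simp
  then show ?thesis
    by (intro summableI_nonneg_bounded) auto
qed

lemma negative_binomial_sums:
  fixes w :: "'a::{real_normed_field,banach}"
  assumes "norm w < 1"
  shows "(\<lambda>j. of_nat ((n + j) choose n) * w^j) sums (1 / (1 - w)^Suc n)"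
  using assms
proof (induction n arbitrary: w)
  case 0
  then show ?case using geometric_sums[of w] by (simp add: divide_inverse)
next
  case (Suc n)
  define v :: 'a where "v = of_real ((1 + norm w) / 2)"
  have v: "norm v < 1" "norm w < norm v"
    using Suc.prems by (simp_all only: v_def norm_of_real) simp_all
  have "summable (\<lambda>j. of_nat ((n + j) choose n) * v^j)"
    using Suc.IH[OF v(1)] by (rule sums_summable)
  then have binomial: "summable (\<lambda>j. norm (of_nat ((n + j) choose n) * w^j))"
    using v(2) by (rule powser_insidea)
  have geometric: "summable (\<lambda>j. norm (w^j))"
    using Suc.prems by (simp add: norm_power summable_geometric)
  have "(\<Sum>i\<le>k. of_nat ((n + i) choose n) * w^i * w^(k - i)) =
      of_nat ((Suc n + k) choose Suc n) * w^k" for k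
  proof -
    have "(\<Sum>i\<le>k. of_nat ((n + i) choose n) * w^i * w^(k - i)) =
        (\<Sum>i\<le>k. of_nat ((n + i) choose n) * w^k)"
      by (intro sum.cong refl) (simp add: mult.assoc flip: power_add)
    also have "\<dots> = of_nat (\<Sum>i\<le>k. (n + i) choose n) * w^k"
      by (simp add: sum_distrib_right)
    also have "(\<Sum>i\<le>k. (n + i) choose n) = (Suc n + k) choose Suc n"
      by (induction k) auto
    finally show ?thesis .
  qed
  then show ?case
    using Cauchy_product_sums[OF binomial geometric] Suc.IH[OF Suc.prems] geometric_sums[OF Suc.prems]
    by (simp add: sums_iff field_simps)
qed

definition kern_coeff :: "nat \<Rightarrow> complex \<Rightarrow> nat \<Rightarrow> complex" where
  "kern_coeff n a k = (if n \<le> k then fact n * of_nat (k choose n) * cnj a ^ (k - n) else 0)"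

lemma norm_kern_coeff_shift:
  "norm (kern_coeff n a (j + n)) = fact n * (real ((n + j) choose n) * norm a ^ j)"
  by (simp add: kern_coeff_def norm_mult norm_power add.commute)

lemma kern_sums:
  assumes "norm a \<le> 1" and "norm z < 1"
  shows "(\<lambda>k. kern_coeff n a k * z^k) sums kern n a z"
proof -
  have "norm (cnj a * z) \<le> norm z"
    using assms by (simp add: norm_mult mult_left_le_one_le)
  then have "norm (cnj a * z) < 1"
    using assms by linarith
  then have "(\<lambda>j. fact n * z^n * (of_nat ((n + j) choose n) * (cnj a * z)^j)) sums
      (fact n * z^n * (1 / (1 - cnj a * z)^Suc n))"
    by (intro sums_mult negative_binomial_sums)
  moreover have "fact n * z^n * (of_nat ((n + j) choose n) * (cnj a * z)^j) =
      kern_coeff n a (j + n) * z^(j + n)" for j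
    by (simp add: kern_coeff_def power_add power_mult_distrib add.commute mult_ac)
  ultimately have "(\<lambda>j. kern_coeff n a (j + n) * z^(j + n)) sums kern n a z"
    by (simp add: kern_def)
  then show ?thesis
    by (subst (asm) sums_zero_iff_shift) (auto simp: kern_coeff_def)
qed

lemma kern_coeff_square_summable:
  assumes "norm a < 1"
  shows "summable (\<lambda>k. norm (kern_coeff n a k)^2)"
proof -
  have "summable (\<lambda>j. real ((n + j) choose n) * norm a ^ j)"
    using negative_binomial_sums[of "norm a" n] assms by (simp add: sums_iff)
  then have "summable (\<lambda>j. (fact n * (real ((n + j) choose n) * norm a ^ j))^2)"
    by (intro summable_power2_if_summable_nonneg summable_mult) auto
  then have "summable (\<lambda>j. norm (kern_coeff n a (j + n))^2)"
    by (simp only: norm_kern_coeff_shift)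
  then show ?thesis
    using summable_iff_shift[where f = "\<lambda>k. norm (kern_coeff n a k)^2" and k = n] by simp
qed

lemma kern_coeff_square_suminf_ge:
  assumes "norm a < 1"
  shows "(fact n)^2 / (1 - norm a^2) \<le> (\<Sum>k. norm (kern_coeff n a k)^2)"
proof -
  have S: "summable (\<lambda>k. norm (kern_coeff n a k)^2)"
    using assms by (rule kern_coeff_square_summable)
  have geometric: "(\<lambda>j. (fact n)^2 * (norm a^2)^j) sums ((fact n)^2 * (1 / (1 - norm a^2)))"
    using assms by (intro sums_mult geometric_sums) (simp add: abs_square_less_1)
  have "(fact n)^2 * (norm a^2)^j \<le> norm (kern_coeff n a (j + n))^2" for j
  proof -
    have "1 \<le> (n + j) choose n"
      by (simp add: Suc_le_eq)
    then have "1 \<le> real ((n + j) choose n)"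
      by (metis of_nat_1 of_nat_le_iff)
    then have "1 * norm a ^ j \<le> real ((n + j) choose n) * norm a ^ j"
      by (intro mult_right_mono) auto
    then have "(fact n)^2 * (norm a ^ j)^2 \<le> (fact n)^2 * (real ((n + j) choose n) * norm a ^ j)^2"
      by (intro mult_left_mono power_mono) auto
    moreover have "(norm a^2)^j = (norm a^j)^2"
      by (metis power_mult mult.commute)
    ultimately show ?thesis
      by (simp only: norm_kern_coeff_shift power_mult_distrib)
  qed
  moreover have "summable (\<lambda>j. norm (kern_coeff n a (j + n))^2)"
    using S summable_iff_shift[where f = "\<lambda>k. norm (kern_coeff n a k)^2" and k = n] by simp
  ultimately have "(\<Sum>j. (fact n)^2 * (norm a^2)^j) \<le> (\<Sum>j. norm (kern_coeff n a (j + n))^2)"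
    using geometric by (intro suminf_le) (auto simp: sums_iff)
  then have "(fact n)^2 / (1 - norm a^2) \<le> (\<Sum>j. norm (kern_coeff n a (j + n))^2)"
    using geometric by (simp add: sums_iff)
  also have "\<dots> \<le> (\<Sum>k. norm (kern_coeff n a k)^2)"
    using suminf_split_initial_segment[OF S, of n] by (simp add: sum_nonneg)
  finally show ?thesis .
qed

lemma norm_kern_coeff_le:
  assumes "norm a \<le> 1"
  shows "norm (kern_coeff n a k) \<le> fact n * 2^k"
proof (cases "n \<le> k")
  case True
  have "real (k choose n) * norm a ^ (k - n) \<le> 2^k * 1"
    using assms binomial_le_pow2[of k n]
    by (intro mult_mono power_le_one) (auto simp flip: of_nat_le_iff)
  then show ?thesis
    using True by (simp add: kern_coeff_def norm_mult norm_power)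
qed (simp add: kern_coeff_def)

lemma h2_norm_kern:
  assumes "norm a < 1"
  shows "h2_norm (kern n a) = sqrt (\<Sum>k. norm (kern_coeff n a k)^2)"
proof -
  have "h2_inner (kern n a) (kern n a) = (\<Sum>k. kern_coeff n a k * cnj (kern_coeff n a k))"
    using assms by (intro h2_inner_power_series kern_sums kern_coeff_square_summable) auto
  also have "\<dots> = of_real (\<Sum>k. norm (kern_coeff n a k)^2)"
  proof -
    have "(\<lambda>k. complex_of_real (norm (kern_coeff n a k)^2)) sums of_real (\<Sum>k. norm (kern_coeff n a k)^2)"
      using summable_sums[OF kern_coeff_square_summable[OF assms]] by (simp only: sums_of_real_iff)
    then show ?thesis
      by (simp only: complex_norm_square sums_iff)
  qed
  finally show ?thesis
    by (simp add: h2_norm_def)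
qed

lemma h2_norm_kern_ge:
  assumes "norm a < 1"
  shows "fact n / sqrt (1 - norm a^2) \<le> h2_norm (kern n a)"
proof -
  have "sqrt ((fact n)^2 / (1 - norm a^2)) \<le> h2_norm (kern n a)"
    using assms by (simp only: h2_norm_kern real_sqrt_le_iff kern_coeff_square_suminf_ge)
  then show ?thesis
    by (simp add: real_sqrt_divide)
qed

lemma h2_norm_kern_pos:
  assumes "norm a < 1"
  shows "0 < h2_norm (kern n a)"
proof -
  have "0 < fact n / sqrt (1 - norm a^2)"
    using assms by (simp add: abs_square_less_1)
  then show ?thesis
    using h2_norm_kern_ge[OF assms, of n] by linarith
qed

definition ekern_coeff :: "nat \<Rightarrow> complex \<Rightarrow> nat \<Rightarrow> complex" where
  "ekern_coeff n a k = kern_coeff n a k / of_real (h2_norm (kern n a))"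

lemma ekern_sums:
  assumes "norm a < 1" and "norm z < 1"
  shows "(\<lambda>k. ekern_coeff n a k * z^k) sums ekern n a z"
  using sums_divide[OF kern_sums[of a z n], of "of_real (h2_norm (kern n a))"] assms
  by (simp add: ekern_coeff_def ekern_def field_simps)

lemma ekern_coeff_square_sums:
  assumes "norm a < 1"
  shows "(\<lambda>k. norm (ekern_coeff n a k)^2) sums 1"
proof -
  have pos: "0 < h2_norm (kern n a)"
    using assms by (rule h2_norm_kern_pos)
  have eq: "(h2_norm (kern n a))^2 = (\<Sum>k. norm (kern_coeff n a k)^2)"
    using assms by (simp add: h2_norm_kern suminf_nonneg kern_coeff_square_summable)
  have "0 < (\<Sum>k. norm (kern_coeff n a k)^2)"
    using pos eq by (metis zero_less_power)
  moreover have "(\<lambda>k. norm (kern_coeff n a k)^2 / (h2_norm (kern n a))^2) sums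
      ((\<Sum>k. norm (kern_coeff n a k)^2) / (h2_norm (kern n a))^2)"
    using kern_coeff_square_summable[OF assms] by (intro sums_divide summable_sums)
  ultimately show ?thesis
    using pos eq by (simp add: ekern_coeff_def norm_divide power_divide)
qed

lemma norm_ekern_coeff_le:
  assumes "norm a < 1"
  shows "norm (ekern_coeff n a k) \<le> 2^k * sqrt (1 - norm a^2)"
proof -
  have s: "0 < sqrt (1 - norm a^2)"
    using assms by (simp add: abs_square_less_1)
  have "0 < h2_norm (kern n a)"
    using assms by (rule h2_norm_kern_pos)
  then have "norm (ekern_coeff n a k) = norm (kern_coeff n a k) / h2_norm (kern n a)"
    by (simp add: ekern_coeff_def norm_divide)
  also have "\<dots> \<le> fact n * 2^k / (fact n / sqrt (1 - norm a^2))"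
    using s assms by (intro frac_le norm_kern_coeff_le h2_norm_kern_ge) auto
  also have "\<dots> = 2^k * sqrt (1 - norm a^2)"
    by simp
  finally show ?thesis .
qed

lemma h2_inner_ekern:
  assumes "f \<in> hardy2" and "norm a < 1"
  shows "h2_inner f (ekern n a) = (\<Sum>k. taylor_coeff f k * cnj (ekern_coeff n a k))"
  using assms ekern_coeff_square_sums[OF assms(2)]
  by (intro h2_inner_power_series hardy2_taylor_sums ekern_sums hardy2_taylor_coeff_square_summable)
    (auto simp: sums_iff)

lemma norm_h2_inner_ekern_le:
  assumes f: "f \<in> hardy2" and a: "norm a < 1"
  shows "norm (h2_inner f (ekern n a)) \<le>
    (\<Sum>k<K. norm (taylor_coeff f k) * 2^k) * sqrt (1 - norm a^2) +
    sqrt (\<Sum>k. norm (taylor_coeff f (k + K))^2)"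
proof -
  have e: "summable (\<lambda>k. norm (ekern_coeff n a k)^2)" "(\<Sum>k. norm (ekern_coeff n a k)^2) = 1"
    using ekern_coeff_square_sums[OF a] by (auto simp: sums_iff)
  have "norm (h2_inner f (ekern n a)) \<le>
      (\<Sum>k<K. norm (taylor_coeff f k) * norm (ekern_coeff n a k)) +
      sqrt (\<Sum>k. norm (taylor_coeff f (k + K))^2)"
    using norm_suminf_mult_cnj_le[OF hardy2_taylor_coeff_square_summable[OF f] e(1), of K] e(2)
    by (simp add: h2_inner_ekern[OF f a])
  also have "(\<Sum>k<K. norm (taylor_coeff f k) * norm (ekern_coeff n a k)) \<le>
      (\<Sum>k<K. norm (taylor_coeff f k) * 2^k) * sqrt (1 - norm a^2)"
    unfolding sum_distrib_right
    using a by (intro sum_mono) (simp add: mult.assoc mult_left_mono norm_ekern_coeff_le)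
  finally show ?thesis
    by simp
qed

theorem lemma3:
  fixes f :: "complex \<Rightarrow> complex"
  assumes "f \<in> hardy2"
  shows "\<forall>\<epsilon>>0. \<exists>r<1. \<forall>a n. cmod a < 1 \<and> cmod a > r \<longrightarrow>
           cmod (h2_inner f (ekern n a)) < \<epsilon>"
proof (intro allI impI)
  fix \<epsilon> :: real assume "\<epsilon> > 0"
  obtain K where "\<forall>k\<ge>K. \<bar>\<Sum>i. norm (taylor_coeff f (i + k))^2\<bar> < (\<epsilon> / 2)^2"
    using suminf_exist_split[OF _ hardy2_taylor_coeff_square_summable[OF assms], of "(\<epsilon> / 2)^2"]
      \<open>\<epsilon> > 0\<close> by auto
  then have "sqrt (\<Sum>k. norm (taylor_coeff f (k + K))^2) < sqrt ((\<epsilon> / 2)^2)"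
    by (intro real_sqrt_less_mono) auto
  then have tail: "sqrt (\<Sum>k. norm (taylor_coeff f (k + K))^2) < \<epsilon> / 2"
    using \<open>\<epsilon> > 0\<close> by simp
  define M where "M = (\<Sum>k<K. norm (taylor_coeff f k) * 2^k)"
  have "((\<lambda>x. M * sqrt (1 - x^2)) \<longlongrightarrow> 0) (at_left 1)"
    by (auto intro!: tendsto_eq_intros)
  then have "\<forall>\<^sub>F x in at_left 1. M * sqrt (1 - x^2) < \<epsilon> / 2"
    using \<open>\<epsilon> > 0\<close> by (intro order_tendstoD(2)) auto
  then obtain r where "r < 1" and head: "\<And>x. r < x \<Longrightarrow> x < 1 \<Longrightarrow> M * sqrt (1 - x^2) < \<epsilon> / 2"
    by (auto simp: eventually_at_left[of 0])
  have "cmod (h2_inner f (ekern n a)) < \<epsilon>" if "cmod a < 1" "cmod a > r" for a n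
    using norm_h2_inner_ekern_le[OF assms \<open>cmod a < 1\<close>, of n K] head[OF that(2,1)] tail
    by (simp add: M_def)
  then show "\<exists>r<1. \<forall>a n. cmod a < 1 \<and> cmod a > r \<longrightarrow> cmod (h2_inner f (ekern n a)) < \<epsilon>"
    using \<open>r < 1\<close> by blast
qed

end
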